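(* Let $G$ be a tree with $\ell$ leaves and let $1\leq m\leq \ell$. Then $\mathrm{capt}(G,m)\leq \lceil \mathrm{diam}(G)/2\rceil+(m-1)\,\mathrm{diam}(G)$.
   Context: All graphs are reflexive (a player may stay in place). The game of $k$ cops and $m$ robbers on $G$: in round 0 the cops first choose starting vertices, then the robbers choose theirs. In each round $i\geq 1$, all cops move (each to an adjacent vertex or staying), then all robbers move likewise. Several players may occupy the same vertex. Whenever a cop and some robbers occupy the same vertex, those robbers are captured and take no further part in the game. Both sides have full information. The cops win if all robbers are captured after finitely many rounds. For a cop-win graph $G$ (e.g. a tree), $\mathrm{capt}(G,m)$ is the index of the round in which the last robber is captured when one cop plays to minimize this index and $m$ robbers play to maximize it. $\mathrm{diam}(G)$ is the diameter of $G$. *)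

theory Defs
  imports Complex_Main
begin

text \<open>Simple graphs: vertex set V, symmetric irreflexive adjacency E on V.
  Reflexivity of the game graph is modelled by always allowing a player to stay.\<close>

definition graph :: "'a set \<Rightarrow> ('a \<Rightarrow> 'a \<Rightarrow> bool) \<Rightarrow> bool" where
  "graph V E \<longleftrightarrow> finite V \<and> V \<noteq> {} \<and>
     (\<forall>x y. E x y \<longrightarrow> x \<in> V \<and> y \<in> V) \<and>
     (\<forall>x y. E x y \<longrightarrow> E y x) \<and> (\<forall>x. \<not> E x x)"

definition is_walk :: "('a \<Rightarrow> 'a \<Rightarrow> bool) \<Rightarrow> 'a list \<Rightarrow> bool" where
  "is_walk E p \<longleftrightarrow> p \<noteq> [] \<and> (\<forall>i. Suc i < length p \<longrightarrow> E (p ! i) (p ! Suc i))"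

definition walk_len :: "('a \<Rightarrow> 'a \<Rightarrow> bool) \<Rightarrow> nat \<Rightarrow> 'a \<Rightarrow> 'a \<Rightarrow> bool" where
  "walk_len E k u v \<longleftrightarrow> (\<exists>p. is_walk E p \<and> length p = Suc k \<and> hd p = u \<and> last p = v)"

definition connected_graph :: "'a set \<Rightarrow> ('a \<Rightarrow> 'a \<Rightarrow> bool) \<Rightarrow> bool" where
  "connected_graph V E \<longleftrightarrow> (\<forall>u\<in>V. \<forall>v\<in>V. \<exists>k. walk_len E k u v)"

definition has_cycle :: "('a \<Rightarrow> 'a \<Rightarrow> bool) \<Rightarrow> bool" where
  "has_cycle E \<longleftrightarrow> (\<exists>p. is_walk E p \<and> length p \<ge> 3 \<and> distinct p \<and> E (last p) (hd p))"

definition is_tree :: "'a set \<Rightarrow> ('a \<Rightarrow> 'a \<Rightarrow> bool) \<Rightarrow> bool" where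
  "is_tree V E \<longleftrightarrow> graph V E \<and> connected_graph V E \<and> \<not> has_cycle E"

definition leaves :: "'a set \<Rightarrow> ('a \<Rightarrow> 'a \<Rightarrow> bool) \<Rightarrow> 'a set" where
  "leaves V E = {v \<in> V. card {w. E v w} = 1}"

definition gdist :: "('a \<Rightarrow> 'a \<Rightarrow> bool) \<Rightarrow> 'a \<Rightarrow> 'a \<Rightarrow> nat" where
  "gdist E u v = (LEAST k. walk_len E k u v)"

definition diam :: "'a set \<Rightarrow> ('a \<Rightarrow> 'a \<Rightarrow> bool) \<Rightarrow> nat" where
  "diam V E = Max {gdist E u v | u v. u \<in> V \<and> v \<in> V}"

text \<open>Game state: cop position and a list of robbers (None = captured).\<close>
definition capture :: "'a \<Rightarrow> 'a option list \<Rightarrow> 'a option list" where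
  "capture c R = map (\<lambda>r. if r = Some c then None else r) R"

definition robber_moves :: "('a \<Rightarrow> 'a \<Rightarrow> bool) \<Rightarrow> 'a option list \<Rightarrow> 'a option list \<Rightarrow> bool" where
  "robber_moves E R R' \<longleftrightarrow> list_all2 (\<lambda>r r'. case r of None \<Rightarrow> r' = None
        | Some v \<Rightarrow> (\<exists>w. r' = Some w \<and> (w = v \<or> E v w))) R R'"

text \<open>cop_wins E n c R: in the state after the robbers' move (captures applied), with the cop
  at c and robbers R, the cop can force all robbers to be captured within n further rounds.\<close>
fun cop_wins :: "('a \<Rightarrow> 'a \<Rightarrow> bool) \<Rightarrow> nat \<Rightarrow> 'a \<Rightarrow> 'a option list \<Rightarrow> bool" where
  "cop_wins E 0 c R = (\<forall>r\<in>set R. r = None)"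
| "cop_wins E (Suc n) c R = ((\<forall>r\<in>set R. r = None) \<or>
     (\<exists>c'. (c' = c \<or> E c c') \<and>
        (\<forall>R'. robber_moves E (capture c' R) R' \<longrightarrow> cop_wins E n c' (capture c' R'))))"

definition capt :: "'a set \<Rightarrow> ('a \<Rightarrow> 'a \<Rightarrow> bool) \<Rightarrow> nat \<Rightarrow> nat" where
  "capt V E m = (LEAST n. \<exists>c0\<in>V. \<forall>rs. length rs = m \<and> set rs \<subseteq> V \<longrightarrow>
                   cop_wins E n c0 (capture c0 (map Some rs)))"

end

theory Submission imports Defs begin

text \<open>The cop starts at a central vertex, within distance \<lceil>diam/2\<rceil> of every vertex, and hunts
  the robbers one at a time. Stepping towards a robber confines it to the branch of the tree beyond
  the cop's new position, and that branch is one level shallower than the previous one; so a robber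
  in a branch of depth h is caught within h rounds. The first robber therefore falls within
  \<lceil>diam/2\<rceil> rounds and every later one within diam rounds. The only tree property needed is that
  a vertex has at most one neighbour that is not farther from a given vertex: two such neighbours
  would close a cycle.\<close>

lemma is_walk_iff_successively: "is_walk E p \<longleftrightarrow> p \<noteq> [] \<and> successively E p"
  by (simp add: is_walk_def successively_conv_nth)

lemma walk_len_iff:
  "walk_len E k u v \<longleftrightarrow>
     (\<exists>p. p \<noteq> [] \<and> successively E p \<and> length p = Suc k \<and> hd p = u \<and> last p = v)"
  by (simp add: walk_len_def is_walk_iff_successively)

lemma walk_len_Cons: "E u u' \<Longrightarrow> walk_len E k u' v \<Longrightarrow> walk_len E (Suc k) u v"
  unfolding walk_len_iff by (metis length_Cons hd_Cons_tl last_ConsR list.distinct(1) list.sel(1)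
      successively_Cons)

locale connected_finite_graph =
  fixes V :: "'a set" and E :: "'a \<Rightarrow> 'a \<Rightarrow> bool"
  assumes graph: "graph V E" and connected: "connected_graph V E"
begin

abbreviation d :: "'a \<Rightarrow> 'a \<Rightarrow> nat" where "d \<equiv> gdist E"

lemma finite_V: "finite V" and V_nonempty: "V \<noteq> {}"
  and adj_in_V: "E x y \<Longrightarrow> x \<in> V \<and> y \<in> V"
  and adj_sym: "E x y \<Longrightarrow> E y x" and adj_irrefl: "\<not> E x x"
  using graph by (auto simp: graph_def)

lemma walk_len_gdist: "u \<in> V \<Longrightarrow> v \<in> V \<Longrightarrow> walk_len E (d u v) u v"
  using connected unfolding connected_graph_def gdist_def by (metis LeastI_ex)

lemma gdist_le: "walk_len E k u v \<Longrightarrow> d u v \<le> k"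
  unfolding gdist_def by (rule Least_le)

lemma gdist_self [simp]: "d u u = 0"
proof -
  have "walk_len E 0 u u"
    unfolding walk_len_iff by (rule exI[of _ "[u]"]) simp
  then show ?thesis
    using gdist_le by fastforce
qed

lemma gdist_eq_0_iff: "u \<in> V \<Longrightarrow> v \<in> V \<Longrightarrow> d u v = 0 \<longleftrightarrow> u = v"
  using walk_len_gdist[of u v] unfolding walk_len_iff
  by (metis gdist_self hd_conv_nth last_conv_nth diff_Suc_1)

lemma successively_rev_adj: "successively E xs \<Longrightarrow> successively E (rev xs)"
  by (simp add: successively_rev) (metis (mono_tags, lifting) adj_sym successively_mono)

lemma walk_len_sym: "walk_len E k u v \<Longrightarrow> walk_len E k v u"
  unfolding walk_len_iff
  by (metis Nil_is_rev_conv hd_rev last_rev length_rev successively_rev_adj)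

lemma gdist_sym: "u \<in> V \<Longrightarrow> v \<in> V \<Longrightarrow> d u v = d v u"
  by (meson antisym gdist_le walk_len_gdist walk_len_sym)

lemma gdist_adj_le: "E u u' \<Longrightarrow> v \<in> V \<Longrightarrow> d u v \<le> d u' v + 1"
  using walk_len_Cons walk_len_gdist adj_in_V gdist_le by (metis Suc_eq_plus1)

lemma closer_neighbour:
  assumes "u \<in> V" "v \<in> V" "u \<noteq> v"
  obtains p where "E u p" "d p v + 1 = d u v"
proof -
  obtain q where q: "q \<noteq> []" "successively E q" "length q = Suc (d u v)" "hd q = u" "last q = v"
    using walk_len_gdist[OF assms(1,2)] unfolding walk_len_iff by blast
  have "d u v \<noteq> 0"
    using gdist_eq_0_iff assms by simp
  then obtain p q' where q_eq: "q = u # p # q'"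
    using q by (cases q; cases "tl q") auto
  have "E u p"
    using q(2) q_eq by simp
  moreover have "walk_len E (d u v - 1) p v"
    unfolding walk_len_iff using q q_eq by (intro exI[of _ "p # q'"]) auto
  then have "d p v \<le> d u v - 1"
    by (rule gdist_le)
  moreover have "d u v \<le> d p v + 1"
    using gdist_adj_le \<open>E u p\<close> assms(2) by blast
  ultimately show thesis
    using that \<open>d u v \<noteq> 0\<close> by simp
qed

definition geodesic :: "'a list \<Rightarrow> 'a \<Rightarrow> 'a \<Rightarrow> bool" where
  "geodesic p u v \<longleftrightarrow> p \<noteq> [] \<and> successively E p \<and> length p = Suc (d u v) \<and> hd p = u \<and> last p = v"

lemma geodesic_exists: "u \<in> V \<Longrightarrow> v \<in> V \<Longrightarrow> \<exists>p. geodesic p u v"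
  using walk_len_gdist unfolding walk_len_iff geodesic_def by blast

lemma geodesic_distinct:
  assumes "geodesic p u v"
  shows "distinct p"
proof (rule ccontr)
  assume "\<not> distinct p"
  then obtain xs y ys zs where p_eq: "p = xs @ [y] @ ys @ [y] @ zs"
    using not_distinct_decomp by blast
  let ?q = "xs @ [y] @ zs"
  have "successively E ?q"
    using assms p_eq unfolding geodesic_def
    by (auto simp: successively_append_iff successively_Cons split: if_splits)
  moreover have "hd ?q = u"
    using assms p_eq unfolding geodesic_def by (cases xs) auto
  moreover have "last ?q = v"
    using assms p_eq unfolding geodesic_def by (cases zs) auto
  ultimately have "walk_len E (length ?q - 1) u v"
    unfolding walk_len_iff by (intro exI[of _ ?q]) auto
  then have "d u v \<le> length ?q - 1"
    by (rule gdist_le)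
  then show False
    using assms p_eq unfolding geodesic_def by auto
qed

lemma adj_not_on_geodesic:
  assumes P: "geodesic P x w" and "E y x" and "d x w \<le> d y w"
  shows "y \<notin> set P"
proof
  assume "y \<in> set P"
  then obtain j where j: "j < length P" "P ! j = y"
    by (auto simp: in_set_conv_nth)
  have "j \<noteq> 0"
    using j P \<open>E y x\<close> adj_irrefl unfolding geodesic_def by (metis hd_conv_nth)
  have "walk_len E (d x w - j) y w"
    unfolding walk_len_iff using P j
    by (intro exI[of _ "drop j P"]) (auto simp: geodesic_def hd_drop_conv_nth successively_conv_nth)
  then have "d y w \<le> d x w - j"
    by (rule gdist_le)
  then show False
    using \<open>j \<noteq> 0\<close> \<open>d x w \<le> d y w\<close> j P unfolding geodesic_def by auto
qed

text \<open>The cycle runs from y along P up to its first vertex on Q, then back along Q to z.\<close>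
lemma paths_close_cycle:
  assumes P: "P \<noteq> []" "successively E P" "distinct P" "hd P = x" "y \<notin> set P"
    and Q: "Q \<noteq> []" "successively E Q" "distinct Q" "hd Q = z" "y \<notin> set Q"
    and "last P = last Q" and "E y x" "E y z" "x \<noteq> z"
  shows "has_cycle E"
proof -
  have "\<exists>a\<in>set P. a \<in> set Q"
    using P Q \<open>last P = last Q\<close> by (metis last_in_set)
  then obtain P1 v P2 where P_eq: "P = P1 @ v # P2" and "v \<in> set Q" and "\<forall>a\<in>set P1. a \<notin> set Q"
    using split_list_first_prop[of P "\<lambda>a. a \<in> set Q"] by blast
  obtain Q1 Q2 where Q_eq: "Q = Q1 @ v # Q2"
    using \<open>v \<in> set Q\<close> split_list by metis
  let ?c = "y # P1 @ v # rev Q1"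
  have "successively E (P1 @ [v])"
    using P(2) P_eq by (simp add: successively_append_iff)
  moreover have "successively E (v # rev Q1)"
    using Q(2) Q_eq successively_rev_adj[of "Q1 @ [v]"] by (simp add: successively_append_iff)
  ultimately have "successively E (P1 @ v # rev Q1)"
    by (cases Q1 rule: rev_cases) (auto simp: successively_append_iff successively_Cons)
  moreover have "hd (P1 @ [v]) = x"
    using P(4) P_eq by (cases P1) auto
  ultimately have "successively E ?c"
    using \<open>E y x\<close> by (cases P1) (auto simp: successively_Cons)
  moreover have "last ?c = z"
    using Q(4) Q_eq by (cases Q1) auto
  moreover have "distinct ?c"
    using P Q P_eq Q_eq \<open>\<forall>a\<in>set P1. a \<notin> set Q\<close> by auto
  moreover have "length ?c \<ge> 3"
    using P(4) Q(4) P_eq Q_eq \<open>x \<noteq> z\<close>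
    by (cases P1; cases Q1) auto
  ultimately show "has_cycle E"
    unfolding has_cycle_def is_walk_iff_successively using \<open>E y z\<close> adj_sym
    by (intro exI[of _ ?c]) auto
qed

lemma walk_in_V: "successively E p \<Longrightarrow> p \<noteq> [] \<Longrightarrow> hd p \<in> V \<Longrightarrow> set p \<subseteq> V"
proof (induction p rule: induct_list012)
  case (3 x y zs)
  then show ?case
    using adj_in_V[of x y] by simp
qed simp_all

lemma finite_gdists: "finite {d u v | u v. u \<in> V \<and> v \<in> V}"
  using finite_image_set2[of "\<lambda>u. u \<in> V" "\<lambda>v. v \<in> V" d] finite_V by simp

lemma gdist_le_diam: "u \<in> V \<Longrightarrow> v \<in> V \<Longrightarrow> d u v \<le> diam V E"
  unfolding diam_def using finite_gdists by (intro Max_ge) auto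

lemma diam_attained: obtains u v where "u \<in> V" "v \<in> V" "d u v = diam V E"
proof -
  have "diam V E \<in> {d u v | u v. u \<in> V \<and> v \<in> V}"
    unfolding diam_def using finite_gdists V_nonempty by (intro Max_in) auto
  then obtain u v where "u \<in> V" "v \<in> V" "diam V E = d u v"
    by blast
  then show thesis
    using that by simp
qed

end

locale tree = connected_finite_graph +
  assumes no_cycle: "\<not> has_cycle E"
begin

lemma not_farther_neighbour_unique:
  assumes "E y x" "E y z" "w \<in> V" "d x w \<le> d y w" "d z w \<le> d y w"
  shows "x = z"
proof (rule ccontr)
  assume "x \<noteq> z"
  obtain P where P: "geodesic P x w"
    using geodesic_exists adj_in_V assms by blast
  obtain Q where Q: "geodesic Q z w"
    using geodesic_exists adj_in_V assms by blast
  have "y \<notin> set P" "y \<notin> set Q"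
    using adj_not_on_geodesic[OF P] adj_not_on_geodesic[OF Q] assms by auto
  then have "has_cycle E"
    using paths_close_cycle[of P x y Q z] geodesic_distinct[OF P] geodesic_distinct[OF Q]
      P Q assms \<open>x \<noteq> z\<close> unfolding geodesic_def by simp
  then show False
    using no_cycle by blast
qed

lemma gdist_adj_cases:
  assumes "E a b" "w \<in> V"
  shows "d b w = d a w + 1 \<or> d a w = d b w + 1"
proof -
  have "d a w \<noteq> d b w"
  proof
    assume eq: "d a w = d b w"
    show False
    proof (cases "a = w")
      case True
      then show False
        using eq gdist_eq_0_iff adj_in_V assms adj_irrefl by (metis gdist_self)
    next
      case False
      then obtain p where "E a p" "d p w + 1 = d a w"
        using closer_neighbour adj_in_V assms by metis
      then show False
        using not_farther_neighbour_unique[OF \<open>E a p\<close> \<open>E a b\<close> \<open>w \<in> V\<close>] eq by auto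
    qed
  qed
  then show ?thesis
    using gdist_adj_le[OF assms] gdist_adj_le[OF adj_sym[OF assms(1)] assms(2)] by auto
qed

lemma gdist_increases_along_path:
  "P \<noteq> [] \<Longrightarrow> successively E (a # P) \<Longrightarrow> distinct (a # P) \<Longrightarrow> w \<in> V \<Longrightarrow>
     d (hd P) w = d a w + 1 \<Longrightarrow> d (last P) w = d a w + length P"
proof (induction P arbitrary: a rule: list_nonempty_induct)
  case (single b)
  then show ?case by simp
next
  case (cons b P)
  have "E b a" "E b (hd P)" "a \<noteq> hd P"
    using cons.prems cons.hyps adj_sym by (auto simp: neq_Nil_conv)
  then have "d (hd P) w = d b w + 1"
    using not_farther_neighbour_unique[of b a "hd P" w] gdist_adj_cases[of b "hd P" w] cons.prems
    by force
  then show ?case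
    using cons.IH[of b] cons.prems cons.hyps by auto
qed

lemma gdist_grows_towards_an_end:
  assumes "successively E (xs @ c # ys)" "distinct (xs @ c # ys)" "w \<in> V"
  shows "d (hd (xs @ [c])) w = d c w + length xs \<or> d (last (c # ys)) w = d c w + length ys"
proof (cases "xs = [] \<or> ys = []")
  case False
  have walk_ys: "successively E (c # ys)" "distinct (c # ys)"
    using assms(1,2) by (auto simp: successively_append_iff)
  have "successively E (rev ys @ (c # rev xs))"
    using successively_rev_adj[OF assms(1)] by simp
  then have walk_xs: "successively E (c # rev xs)" "distinct (c # rev xs)"
    using successively_append_iff assms(2) by auto
  have "E c (last xs)" "E c (hd ys)" "last xs \<noteq> hd ys"
    using walk_xs walk_ys assms(2) False by (cases xs rule: rev_cases; cases ys; simp)+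
  then have "\<not> (d (last xs) w \<le> d c w \<and> d (hd ys) w \<le> d c w)"
    using not_farther_neighbour_unique[OF \<open>E c (last xs)\<close> \<open>E c (hd ys)\<close> \<open>w \<in> V\<close>] by blast
  then have "d (last xs) w = d c w + 1 \<or> d (hd ys) w = d c w + 1"
    using gdist_adj_cases[OF \<open>E c (last xs)\<close> \<open>w \<in> V\<close>]
      gdist_adj_cases[OF \<open>E c (hd ys)\<close> \<open>w \<in> V\<close>] by linarith
  then show ?thesis
  proof
    assume "d (last xs) w = d c w + 1"
    then show ?thesis
      using gdist_increases_along_path[OF _ walk_xs \<open>w \<in> V\<close>] False
      by (simp add: hd_rev last_rev)
  next
    assume "d (hd ys) w = d c w + 1"
    then show ?thesis
      using gdist_increases_along_path[OF _ walk_ys \<open>w \<in> V\<close>] False by simp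
  qed
qed auto

text \<open>The middle vertex of a diametral path lies within half the diameter of every vertex, since
  the distance to that vertex grows at full speed towards one end of the path.\<close>
lemma central_vertex: obtains c where "c \<in> V" "\<forall>w\<in>V. d c w \<le> (diam V E + 1) div 2"
proof -
  let ?D = "diam V E"
  let ?k = "(?D + 1) div 2"
  obtain u v where "u \<in> V" "v \<in> V" "d u v = ?D"
    using diam_attained .
  then obtain P where P: "geodesic P u v"
    using geodesic_exists by blast
  then have "distinct P" "successively E P" "length P = Suc ?D" "hd P = u" "last P = v"
    using geodesic_distinct \<open>d u v = ?D\<close> unfolding geodesic_def by auto
  define xs ys c where "xs = take ?k P" and "ys = drop (Suc ?k) P" and "c = P ! ?k"
  have P_eq: "P = xs @ c # ys"
    using id_take_nth_drop[of ?k P] \<open>length P = Suc ?D\<close> unfolding xs_def ys_def c_def by simp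
  have "length xs = ?k" "length ys = ?D - ?k"
    using \<open>length P = Suc ?D\<close> unfolding xs_def ys_def by auto
  have "hd (xs @ [c]) = u" "last (c # ys) = v"
    using \<open>hd P = u\<close> \<open>last P = v\<close> P_eq by (cases xs; simp)+
  have "c \<in> V"
    using walk_in_V[of P] P \<open>u \<in> V\<close> P_eq unfolding geodesic_def by auto
  moreover have "d c w \<le> ?k" if "w \<in> V" for w
  proof -
    have "d u w = d c w + ?k \<or> d v w = d c w + (?D - ?k)"
      using gdist_grows_towards_an_end[of xs c ys w, folded P_eq, OF \<open>successively E P\<close>
          \<open>distinct P\<close> \<open>w \<in> V\<close>]
      unfolding \<open>hd (xs @ [c]) = u\<close> \<open>last (c # ys) = v\<close> \<open>length xs = ?k\<close> \<open>length ys = ?D - ?k\<close> .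
    moreover have "?D - ?k \<le> ?k"
      by simp
    ultimately show ?thesis
      using gdist_le_diam[OF \<open>u \<in> V\<close> \<open>w \<in> V\<close>] gdist_le_diam[OF \<open>v \<in> V\<close> \<open>w \<in> V\<close>] by linarith
  qed
  ultimately show thesis
    using that by blast
qed

text \<open>The branch of the tree at c that contains its neighbour z.\<close>
definition branch :: "'a \<Rightarrow> 'a \<Rightarrow> 'a set" where
  "branch c z = {w \<in> V. d z w < d c w}"

lemma branch_gdist: "E c z \<Longrightarrow> w \<in> branch c z \<Longrightarrow> d c w = d z w + 1"
  unfolding branch_def using gdist_adj_cases by fastforce

lemma branch_disjoint: "w \<in> branch c z \<Longrightarrow> w \<notin> branch z c"
  unfolding branch_def by auto

lemma branch_subset:
  assumes "E c z" "E z z'" "z' \<noteq> c"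
  shows "branch z z' \<subseteq> branch c z"
proof
  fix w assume "w \<in> branch z z'"
  then have "w \<in> V" "d z' w < d z w"
    unfolding branch_def by auto
  then have "\<not> d c w \<le> d z w"
    using not_farther_neighbour_unique[OF adj_sym[OF assms(1)] assms(2)] assms(3) by force
  then show "w \<in> branch c z"
    using \<open>w \<in> V\<close> unfolding branch_def by auto
qed

lemma branch_towards:
  assumes "c \<in> V" "r \<in> V" "r \<noteq> c"
  obtains z where "E c z" "r \<in> branch c z"
proof -
  obtain z where "E c z" "d z r + 1 = d c r"
    using closer_neighbour assms by metis
  then show thesis
    using that \<open>r \<in> V\<close> unfolding branch_def by simp
qed

lemma branch_depth_step:
  assumes "E c z" "r \<in> branch c z" "\<forall>w\<in>branch c z. d c w \<le> Suc h"
    and "E z z'" "r \<in> branch z z'"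
  shows "\<forall>w\<in>branch z z'. d z w \<le> h"
proof
  fix w assume "w \<in> branch z z'"
  have "z' \<noteq> c"
    using assms(2,5) branch_disjoint by blast
  then have "w \<in> branch c z"
    using branch_subset assms(1,4) \<open>w \<in> branch z z'\<close> by blast
  then show "d z w \<le> h"
    using assms(3) branch_gdist[OF assms(1)] by fastforce
qed

text \<open>If the robber left the branch, r would have two neighbours, r' and the next vertex
  towards z, that are both not farther from c.\<close>
lemma branch_robber_step:
  assumes "E c z" "r \<in> branch c z" "r \<noteq> z" "r' = r \<or> E r r'"
  shows "r' \<in> branch c z"
proof (cases "r' = r")
  case False
  then have "E r r'" using assms(4) by simp
  have "c \<in> V" "z \<in> V" "r \<in> V" "r' \<in> V"
    using assms(1,2) \<open>E r r'\<close> adj_in_V unfolding branch_def by auto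
  have "d z r < d c r"
    using assms(2) unfolding branch_def by simp
  obtain p where "E r p" "d p z + 1 = d r z"
    using closer_neighbour \<open>r \<in> V\<close> \<open>z \<in> V\<close> assms(3) by metis
  have "p \<in> V"
    using \<open>E r p\<close> adj_in_V by blast
  have sym: "d p c = d c p" "d p z = d z p" "d r c = d c r" "d r z = d z r" "d r' c = d c r'"
      "d r' z = d z r'"
    using gdist_sym[OF \<open>p \<in> V\<close> \<open>c \<in> V\<close>] gdist_sym[OF \<open>p \<in> V\<close> \<open>z \<in> V\<close>]
      gdist_sym[OF \<open>r \<in> V\<close> \<open>c \<in> V\<close>] gdist_sym[OF \<open>r \<in> V\<close> \<open>z \<in> V\<close>]
      gdist_sym[OF \<open>r' \<in> V\<close> \<open>c \<in> V\<close>] gdist_sym[OF \<open>r' \<in> V\<close> \<open>z \<in> V\<close>] by simp_all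
  show ?thesis
  proof (rule ccontr)
    assume "r' \<notin> branch c z"
    then have "d c r' \<le> d z r'"
      using \<open>r' \<in> V\<close> unfolding branch_def by auto
    have "d c p \<le> d z p + 1"
      using gdist_adj_le[OF assms(1) \<open>p \<in> V\<close>] .
    then have "d p c \<le> d r c"
      using \<open>d p z + 1 = d r z\<close> \<open>d z r < d c r\<close> sym by linarith
    have "d r' z \<le> d r z + 1"
      using gdist_adj_le[OF adj_sym[OF \<open>E r r'\<close>] \<open>z \<in> V\<close>] .
    then have "d r' c \<le> d r c"
      using \<open>d c r' \<le> d z r'\<close> \<open>d z r < d c r\<close> sym by linarith
    have "d r c \<le> d r' c + 1"
      using gdist_adj_le[OF \<open>E r r'\<close> \<open>c \<in> V\<close>] .
    then have "r' \<noteq> p"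
      using \<open>d c r' \<le> d z r'\<close> \<open>d p z + 1 = d r z\<close> \<open>d z r < d c r\<close> sym by auto
    then show False
      using not_farther_neighbour_unique[OF \<open>E r r'\<close> \<open>E r p\<close> \<open>c \<in> V\<close>]
        \<open>d r' c \<le> d r c\<close> \<open>d p c \<le> d r c\<close> by blast
  qed
qed (use assms in simp)

end

definition num_alive :: "'a option list \<Rightarrow> nat" where
  "num_alive R = card {i. i < length R \<and> R ! i \<noteq> None}"

definition stays_captured :: "'a option list \<Rightarrow> 'a option list \<Rightarrow> bool" where
  "stays_captured R R' \<longleftrightarrow> length R' = length R \<and> (\<forall>i<length R. R ! i = None \<longrightarrow> R' ! i = None)"

lemma num_alive_le_length: "num_alive R \<le> length R"
proof -
  have "num_alive R \<le> card {..<length R}"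
    unfolding num_alive_def by (intro card_mono) auto
  then show ?thesis
    by simp
qed

lemma num_alive_mono: "stays_captured R R' \<Longrightarrow> num_alive R' \<le> num_alive R"
  unfolding num_alive_def stays_captured_def by (intro card_mono) auto

lemma num_alive_strict_mono:
  assumes "stays_captured R R'" "i < length R" "R ! i \<noteq> None" "R' ! i = None"
  shows "num_alive R' < num_alive R"
  unfolding num_alive_def
proof (rule psubset_card_mono)
  have "{i. i < length R' \<and> R' ! i \<noteq> None} \<subseteq> {i. i < length R \<and> R ! i \<noteq> None}"
    using assms(1) unfolding stays_captured_def by auto
  moreover have "i \<in> {i. i < length R \<and> R ! i \<noteq> None} - {i. i < length R' \<and> R' ! i \<noteq> None}"
    using assms(2-4) by simp
  ultimately show "{i. i < length R' \<and> R' ! i \<noteq> None} \<subset> {i. i < length R \<and> R ! i \<noteq> None}"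
    by blast
qed simp

lemma num_alive_eq_0: "num_alive R = 0 \<Longrightarrow> \<forall>r\<in>set R. r = None"
  unfolding num_alive_def by (auto simp: in_set_conv_nth)

lemma cop_wins_all_captured: "\<forall>r\<in>set R. r = None \<Longrightarrow> cop_wins E n c R"
  by (cases n) auto

lemma cop_wins_mono: "cop_wins E n c R \<Longrightarrow> n \<le> n' \<Longrightarrow> cop_wins E n' c R"
proof (induction n arbitrary: c R n')
  case 0
  then show ?case using cop_wins_all_captured by auto
next
  case (Suc n)
  then show ?case by (cases n') auto
qed

lemma length_capture [simp]: "length (capture c R) = length R"
  by (simp add: capture_def)

lemma capture_nth: "i < length R \<Longrightarrow> capture c R ! i = (if R ! i = Some c then None else R ! i)"
  by (simp add: capture_def)

lemma Some_notin_capture: "Some c \<notin> set (capture c R)"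
  by (auto simp: capture_def)

lemma set_capture: "set (capture c R) \<subseteq> set R \<union> {None}"
  by (auto simp: capture_def)

lemma robber_moves_nth:
  "robber_moves E R R' \<Longrightarrow> i < length R \<Longrightarrow>
     (case R ! i of None \<Rightarrow> R' ! i = None | Some v \<Rightarrow> (\<exists>w. R' ! i = Some w \<and> (w = v \<or> E v w)))"
  unfolding robber_moves_def by (simp add: list_all2_conv_all_nth)

lemma robber_moves_length: "robber_moves E R R' \<Longrightarrow> length R' = length R"
  by (simp add: robber_moves_def list_all2_lengthD)

lemma robber_moves_stays_captured:
  assumes "robber_moves E (capture z R) R'"
  shows "stays_captured R (capture z R')"
  unfolding stays_captured_def
proof (intro conjI allI impI)
  show "length (capture z R') = length R"
    using robber_moves_length[OF assms] by simp
  fix i assume "i < length R" "R ! i = None"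
  then have "R' ! i = None"
    using robber_moves_nth[OF assms, of i] by (simp add: capture_nth)
  then show "capture z R' ! i = None"
    using robber_moves_length[OF assms] \<open>i < length R\<close> by (simp add: capture_nth)
qed

lemma robber_moves_Some:
  assumes "robber_moves E (capture z R) R'" "i < length R" "R ! i = Some r"
    and "capture z R' ! i = Some r'"
  shows "r \<noteq> z \<and> (r' = r \<or> E r r')"
  using robber_moves_length[OF assms(1)] robber_moves_nth[OF assms(1), of i] assms(2-)
  by (auto simp: capture_nth split: if_splits)

definition robbers_in :: "'a set \<Rightarrow> 'a option list \<Rightarrow> bool" where
  "robbers_in V R \<longleftrightarrow> set R \<subseteq> insert None (Some ` V)"

lemma robbers_in_nth: "robbers_in V R \<Longrightarrow> i < length R \<Longrightarrow> R ! i = Some r \<Longrightarrow> r \<in> V"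
  unfolding robbers_in_def using nth_mem[of i R] by auto

context tree
begin

lemma robber_moves_robbers_in:
  assumes "robbers_in V R" "robber_moves E (capture z R) R'"
  shows "robbers_in V (capture z R')"
proof -
  have "set R' \<subseteq> insert None (Some ` V)"
  proof
    fix r' assume "r' \<in> set R'"
    then obtain i where i: "i < length R" "R' ! i = r'"
      using robber_moves_length[OF assms(2)] by (auto simp: in_set_conv_nth)
    show "r' \<in> insert None (Some ` V)"
    proof (cases "capture z R ! i")
      case None
      then show ?thesis
        using robber_moves_nth[OF assms(2), of i] i by simp
    next
      case (Some v)
      then have "Some v \<in> set R"
        using set_capture[of z R] nth_mem[of i "capture z R"] i(1) by auto
      then have "v \<in> V"
        using assms(1) unfolding robbers_in_def by auto
      then show ?thesis
        using robber_moves_nth[OF assms(2), of i] i Some adj_in_V by auto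
    qed
  qed
  then show ?thesis
    using set_capture[of z R'] unfolding robbers_in_def by blast
qed

text \<open>h bounds the depth of the branch at c containing robber r; once r is caught, hypothesis rest
  provides k further rounds for the remaining robbers.\<close>
lemma chase_robber:
  assumes rest: "\<And>c' R'. c' \<in> V \<Longrightarrow> robbers_in V R' \<Longrightarrow> Some c' \<notin> set R' \<Longrightarrow> num_alive R' < a \<Longrightarrow>
      cop_wins E k c' R'"
  shows "c \<in> V \<Longrightarrow> robbers_in V R \<Longrightarrow> Some c \<notin> set R \<Longrightarrow> num_alive R \<le> a \<Longrightarrow>
    i < length R \<Longrightarrow> R ! i = Some r \<Longrightarrow>
    (\<forall>z. E c z \<longrightarrow> r \<in> branch c z \<longrightarrow> (\<forall>w\<in>branch c z. d c w \<le> h)) \<Longrightarrow>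
    cop_wins E (h + k) c R"
proof (induction h arbitrary: c R r)
  case h: 0
  have "r \<in> V" "r \<noteq> c"
    using robbers_in_nth[OF h(2,5,6)] h(3,5,6) nth_mem[of i R] by auto
  then obtain z where "E c z" "r \<in> branch c z"
    using branch_towards \<open>c \<in> V\<close> by metis
  then show ?case
    using h(7) \<open>r \<in> V\<close> \<open>r \<noteq> c\<close> gdist_eq_0_iff \<open>c \<in> V\<close> unfolding branch_def by fastforce
next
  case (Suc h)
  have "r \<in> V" "r \<noteq> c"
    using robbers_in_nth[OF Suc.prems(2,5,6)] Suc.prems(3,5,6) nth_mem[of i R] by auto
  then obtain z where "E c z" "r \<in> branch c z"
    using branch_towards \<open>c \<in> V\<close> by metis
  then have "z \<in> V"
    using adj_in_V by blast
  have "cop_wins E (h + k) z (capture z R')" if moves: "robber_moves E (capture z R) R'" for R'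
  proof -
    let ?R = "capture z R'"
    have "stays_captured R ?R"
      using robber_moves_stays_captured[OF moves] .
    have "robbers_in V ?R"
      using robber_moves_robbers_in[OF Suc.prems(2) moves] .
    have "num_alive ?R \<le> a"
      using num_alive_mono[OF \<open>stays_captured R ?R\<close>] Suc.prems(4) by simp
    show ?thesis
    proof (cases "?R ! i")
      case None
      then have "num_alive ?R < a"
        using num_alive_strict_mono[OF \<open>stays_captured R ?R\<close> Suc.prems(5)] Suc.prems(4,6) by simp
      then have "cop_wins E k z ?R"
        by (rule rest[OF \<open>z \<in> V\<close> \<open>robbers_in V ?R\<close> Some_notin_capture])
      then show ?thesis
        by (rule cop_wins_mono) simp
    next
      case (Some r')
      then have "r \<noteq> z" "r' = r \<or> E r r'"
        using robber_moves_Some[OF moves Suc.prems(5,6)] by auto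
      then have "r' \<in> branch c z"
        using branch_robber_step \<open>E c z\<close> \<open>r \<in> branch c z\<close> by blast
      then have "\<forall>z'. E z z' \<longrightarrow> r' \<in> branch z z' \<longrightarrow> (\<forall>w\<in>branch z z'. d z w \<le> h)"
        using branch_depth_step[OF \<open>E c z\<close>] Suc.prems(7) \<open>E c z\<close> \<open>r \<in> branch c z\<close> by blast
      then show ?thesis
        using Suc.IH[OF \<open>z \<in> V\<close> \<open>robbers_in V ?R\<close> Some_notin_capture \<open>num_alive ?R \<le> a\<close> _ Some]
          Suc.prems(5) robber_moves_length[OF moves] by auto
    qed
  qed
  then show ?case
    unfolding add_Suc cop_wins.simps(2) using \<open>E c z\<close> by blast
qed

lemma cop_wins_within:
  "c \<in> V \<Longrightarrow> robbers_in V R \<Longrightarrow> Some c \<notin> set R \<Longrightarrow> num_alive R \<le> Suc j \<Longrightarrow>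
    \<forall>w\<in>V. d c w \<le> h \<Longrightarrow> cop_wins E (h + j * diam V E) c R"
proof (induction j arbitrary: c R h)
  case j: 0
  show ?case
  proof (cases "\<forall>r\<in>set R. r = None")
    case False
    then obtain i r where "i < length R" "R ! i = Some r"
      by (metis in_set_conv_nth not_None_eq)
    have "cop_wins E 0 c' R'" if "num_alive R' < Suc 0" for c' R'
      using that num_alive_eq_0 cop_wins_all_captured by simp
    then show ?thesis
      using chase_robber[of "Suc 0" 0, OF _ j(1-4) \<open>i < length R\<close> \<open>R ! i = Some r\<close>, of h] j(5)
      unfolding branch_def by simp
  qed (rule cop_wins_all_captured)
next
  case (Suc j)
  show ?case
  proof (cases "\<forall>r\<in>set R. r = None")
    case False
    then obtain i r where "i < length R" "R ! i = Some r"
      by (metis in_set_conv_nth not_None_eq)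
    have "\<And>c' R'. c' \<in> V \<Longrightarrow> robbers_in V R' \<Longrightarrow> Some c' \<notin> set R' \<Longrightarrow> num_alive R' < Suc (Suc j) \<Longrightarrow>
        cop_wins E (diam V E + j * diam V E) c' R'"
      using Suc.IH gdist_le_diam by simp
    then show ?thesis
      using chase_robber[of "Suc (Suc j)" "Suc j * diam V E"] Suc.prems \<open>i < length R\<close>
        \<open>R ! i = Some r\<close> unfolding branch_def by (simp add: add.assoc)
  qed (rule cop_wins_all_captured)
qed

lemma capt_le:
  assumes "1 \<le> m"
  shows "capt V E m \<le> (diam V E + 1) div 2 + (m - 1) * diam V E"
proof -
  obtain c where "c \<in> V" "\<forall>w\<in>V. d c w \<le> (diam V E + 1) div 2"
    using central_vertex .
  have "cop_wins E ((diam V E + 1) div 2 + (m - 1) * diam V E) c (capture c (map Some rs))"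
    if "length rs = m" "set rs \<subseteq> V" for rs
  proof (rule cop_wins_within)
    show "robbers_in V (capture c (map Some rs))"
      using that set_capture[of c "map Some rs"] unfolding robbers_in_def by auto
    show "num_alive (capture c (map Some rs)) \<le> Suc (m - 1)"
      using num_alive_le_length[of "capture c (map Some rs)"] that assms by simp
    show "Some c \<notin> set (capture c (map Some rs))"
      by (rule Some_notin_capture)
  qed (use \<open>c \<in> V\<close> \<open>\<forall>w\<in>V. _\<close> in auto)
  then show ?thesis
    unfolding capt_def using \<open>c \<in> V\<close> by (intro Least_le) blast
qed

end

lemma ceiling_half: "\<lceil>real n / 2\<rceil> = int ((n + 1) div 2)"
proof -
  have "\<lceil>real n / 2\<rceil> = - (- int n div 2)"
    using ceiling_divide_eq_div[of "int n" 2, where 'a = real] by simp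
  also have "\<dots> = int ((n + 1) div 2)"
    by presburger
  finally show ?thesis .
qed

theorem mainTheorem9:
  fixes V :: "'a set" and E :: "'a \<Rightarrow> 'a \<Rightarrow> bool" and m :: nat
  assumes "is_tree V E"
    and "1 \<le> m" and "m \<le> card (leaves V E)"
  shows "int (capt V E m) \<le> \<lceil>real (diam V E) / 2\<rceil> + (int m - 1) * int (diam V E)"
proof -
  interpret tree V E
    using assms(1) by unfold_locales (simp_all add: is_tree_def)
  have "int (capt V E m) \<le> int ((diam V E + 1) div 2 + (m - 1) * diam V E)"
    using capt_le[OF assms(2)] by (simp only: of_nat_le_iff)
  also have "\<dots> = \<lceil>real (diam V E) / 2\<rceil> + (int m - 1) * int (diam V E)"
    using assms(2) unfolding ceiling_half by (simp add: of_nat_diff)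
  finally show ?thesis .
qed

end
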